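(* If $\mathfrak{X}$ is a finite co-tree which validates $\mathcal{J}(\mathfrak{F}_3)$, then every point $x\in X$ has at most $2$ immediate predecessors.
   Context: A co-tree is a poset with a greatest element in which every principal upset $\uparrow x$ is a chain. An immediate predecessor of $x$ is a point $y<x$ such that no $z$ satisfies $y<z<x$. $\mathfrak{F}_3$ is the four-element co-tree with top $a$ and three pairwise incomparable minimal points $b,c,d$ below $a$. For a finite co-tree $\mathfrak{Y}$, the Jankov formula $\mathcal{J}(\mathfrak{Y})$ is a bi-intuitionistic formula with the property that a finite co-tree $\mathfrak{X}$ (viewed as a Kripke frame, with $\leftarrow$ interpreted by $x\models\varphi\leftarrow\psi$ iff there is $y\le x$ with $y\models\varphi$ and $y\not\models\psi$) refutes $\mathcal{J}(\mathfrak{Y})$ iff there is a surjective bi-p-morphism $\mathfrak{X}\to\mathfrak{Y}$. A bi-p-morphism is an order-preserving map $f$ such that $f(x)\le y$ implies $y=f(z)$ for some $z\ge x$, and $y\le f(x)$ implies $y=f(z)$ for some $z\le x$. *)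

theory Defs
  imports Main
begin

(* Bi-intuitionistic formulas; Coimp phi psi is  phi <- psi  (co-implication) *)
datatype 'v biform =
    Var 'v | Bot | Top
  | And "'v biform" "'v biform" | Or "'v biform" "'v biform"
  | Imp "'v biform" "'v biform" | Coimp "'v biform" "'v biform"

definition partial_order_on_set :: "'a set \<Rightarrow> ('a \<Rightarrow> 'a \<Rightarrow> bool) \<Rightarrow> bool" where
  "partial_order_on_set X le \<longleftrightarrow>
     (\<forall>x\<in>X. le x x) \<and>
     (\<forall>x\<in>X. \<forall>y\<in>X. le x y \<and> le y x \<longrightarrow> x = y) \<and>
     (\<forall>x\<in>X. \<forall>y\<in>X. \<forall>z\<in>X. le x y \<and> le y z \<longrightarrow> le x z)"

definition co_tree :: "'a set \<Rightarrow> ('a \<Rightarrow> 'a \<Rightarrow> bool) \<Rightarrow> bool" where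
  "co_tree X le \<longleftrightarrow> partial_order_on_set X le \<and>
     (\<exists>t\<in>X. \<forall>x\<in>X. le x t) \<and>
     (\<forall>x\<in>X. \<forall>y\<in>X. \<forall>z\<in>X. le x y \<and> le x z \<longrightarrow> le y z \<or> le z y)"

definition finite_co_tree :: "'a set \<Rightarrow> ('a \<Rightarrow> 'a \<Rightarrow> bool) \<Rightarrow> bool" where
  "finite_co_tree X le \<longleftrightarrow> finite X \<and> co_tree X le"

fun sat :: "'a set \<Rightarrow> ('a \<Rightarrow> 'a \<Rightarrow> bool) \<Rightarrow> ('v \<Rightarrow> 'a set) \<Rightarrow> 'a \<Rightarrow> 'v biform \<Rightarrow> bool" where
  "sat X le V x (Var p) = (x \<in> V p)"
| "sat X le V x Bot = False"
| "sat X le V x Top = True"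
| "sat X le V x (And a b) = (sat X le V x a \<and> sat X le V x b)"
| "sat X le V x (Or a b) = (sat X le V x a \<or> sat X le V x b)"
| "sat X le V x (Imp a b) = (\<forall>y\<in>X. le x y \<and> sat X le V y a \<longrightarrow> sat X le V y b)"
| "sat X le V x (Coimp a b) = (\<exists>y\<in>X. le y x \<and> sat X le V y a \<and> \<not> sat X le V y b)"

definition upset_valuation :: "'a set \<Rightarrow> ('a \<Rightarrow> 'a \<Rightarrow> bool) \<Rightarrow> ('v \<Rightarrow> 'a set) \<Rightarrow> bool" where
  "upset_valuation X le V \<longleftrightarrow>
     (\<forall>p. V p \<subseteq> X \<and> (\<forall>x\<in>V p. \<forall>y\<in>X. le x y \<longrightarrow> y \<in> V p))"

definition validates :: "'a set \<Rightarrow> ('a \<Rightarrow> 'a \<Rightarrow> bool) \<Rightarrow> 'v biform \<Rightarrow> bool" where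
  "validates X le \<phi> \<longleftrightarrow> (\<forall>V. upset_valuation X le V \<longrightarrow> (\<forall>x\<in>X. sat X le V x \<phi>))"

definition refutes :: "'a set \<Rightarrow> ('a \<Rightarrow> 'a \<Rightarrow> bool) \<Rightarrow> 'v biform \<Rightarrow> bool" where
  "refutes X le \<phi> \<longleftrightarrow> \<not> validates X le \<phi>"

definition bi_p_morphism ::
  "'a set \<Rightarrow> ('a \<Rightarrow> 'a \<Rightarrow> bool) \<Rightarrow> 'b set \<Rightarrow> ('b \<Rightarrow> 'b \<Rightarrow> bool) \<Rightarrow> ('a \<Rightarrow> 'b) \<Rightarrow> bool" where
  "bi_p_morphism X le Y leY f \<longleftrightarrow>
     (\<forall>x\<in>X. f x \<in> Y) \<and>
     (\<forall>x\<in>X. \<forall>x'\<in>X. le x x' \<longrightarrow> leY (f x) (f x')) \<and>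
     (\<forall>x\<in>X. \<forall>y\<in>Y. leY (f x) y \<longrightarrow> (\<exists>z\<in>X. le x z \<and> f z = y)) \<and>
     (\<forall>x\<in>X. \<forall>y\<in>Y. leY y (f x) \<longrightarrow> (\<exists>z\<in>X. le z x \<and> f z = y))"

definition surj_bi_p_morphism ::
  "'a set \<Rightarrow> ('a \<Rightarrow> 'a \<Rightarrow> bool) \<Rightarrow> 'b set \<Rightarrow> ('b \<Rightarrow> 'b \<Rightarrow> bool) \<Rightarrow> ('a \<Rightarrow> 'b) \<Rightarrow> bool" where
  "surj_bi_p_morphism X le Y leY f \<longleftrightarrow> bi_p_morphism X le Y leY f \<and> f ` X = Y"

(* F_3: top a = 0, minimal points b = 1, c = 2, d = 3 *)
definition F3 :: "nat set" where "F3 = {0, 1, 2, 3}"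
definition F3_le :: "nat \<Rightarrow> nat \<Rightarrow> bool" where "F3_le x y \<longleftrightarrow> x = y \<or> y = 0"

definition imm_preds :: "'a set \<Rightarrow> ('a \<Rightarrow> 'a \<Rightarrow> bool) \<Rightarrow> 'a \<Rightarrow> 'a set" where
  "imm_preds X le x = {y \<in> X. le y x \<and> y \<noteq> x \<and>
      \<not> (\<exists>z\<in>X. le y z \<and> y \<noteq> z \<and> le z x \<and> z \<noteq> x)}"

definition is_jankov_F3 :: "'a itself \<Rightarrow> 'v biform \<Rightarrow> bool" where
  "is_jankov_F3 _ \<phi> \<longleftrightarrow>
     (\<forall>(X :: 'a set) le. finite_co_tree X le \<longrightarrow>
        (refutes X le \<phi> \<longleftrightarrow> (\<exists>f. surj_bi_p_morphism X le F3 F3_le f)))"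

end

theory Submission
  imports Defs
begin

text \<open>
  If x has three distinct immediate predecessors p1, p2, p3, collapse the co-tree onto F3 by
  sending the upset of x to the top a, the downsets of p1 and p2 to b and c, and every other
  point (in particular the downset of p3) to d. Since principal upsets are chains, a point that
  is not above x lies below an immediate predecessor q of x exactly when its successors outside
  the upset of x do; so the collapse is constant along every edge leaving the upset of x and
  hence monotone. The back conditions hold because the greatest element maps to a and every
  point above x lies above x, p1, p2 and p3.
\<close>

lemma imm_predsD:
  assumes "q \<in> imm_preds X le x"
  shows "q \<in> X" "le q x" "q \<noteq> x"
    and "\<And>z. z \<in> X \<Longrightarrow> le q z \<Longrightarrow> le z x \<Longrightarrow> z = q \<or> z = x"
  using assms unfolding imm_preds_def by blast+

lemma imm_preds_incomparable:
  assumes "p \<in> imm_preds X le x" "q \<in> imm_preds X le x" "p \<noteq> q"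
  shows "\<not> le p q"
  using assms unfolding imm_preds_def by blast

context
  fixes X :: "'a set" and le :: "'a \<Rightarrow> 'a \<Rightarrow> bool"
  assumes co_tree: "co_tree X le"
begin

lemma co_tree_refl: "u \<in> X \<Longrightarrow> le u u"
  using co_tree unfolding co_tree_def partial_order_on_set_def by blast

lemma co_tree_antisym: "u \<in> X \<Longrightarrow> v \<in> X \<Longrightarrow> le u v \<Longrightarrow> le v u \<Longrightarrow> u = v"
  using co_tree unfolding co_tree_def partial_order_on_set_def by blast

lemma co_tree_trans: "u \<in> X \<Longrightarrow> v \<in> X \<Longrightarrow> w \<in> X \<Longrightarrow> le u v \<Longrightarrow> le v w \<Longrightarrow> le u w"
  using co_tree unfolding co_tree_def partial_order_on_set_def by blast

lemma co_tree_upset_chain: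
  "u \<in> X \<Longrightarrow> v \<in> X \<Longrightarrow> w \<in> X \<Longrightarrow> le u v \<Longrightarrow> le u w \<Longrightarrow> le v w \<or> le w v"
  using co_tree unfolding co_tree_def by blast

lemma co_tree_obtain_top:
  obtains t where "t \<in> X" "\<forall>v\<in>X. le v t"
  using co_tree unfolding co_tree_def by blast

lemma not_above_imm_pred:
  assumes "x \<in> X" "q \<in> imm_preds X le x"
  shows "\<not> le x q"
  using assms co_tree_antisym imm_predsD(1-3) by metis

lemma below_imm_pred_iff:
  assumes x: "x \<in> X" and q: "q \<in> imm_preds X le x"
    and uv: "u \<in> X" "v \<in> X" "le u v" and not_above: "\<not> le x v"
  shows "le u q \<longleftrightarrow> le v q"
proof
  assume uq: "le u q"
  show "le v q"
  proof (rule ccontr)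
    assume not_vq: "\<not> le v q"
    have qX: "q \<in> X" "le q x" using imm_predsD(1,2)[OF q] .
    then have "le q v" using co_tree_upset_chain uv uq not_vq by blast
    then have "le v x" using co_tree_upset_chain qX x uv(2) not_above by blast
    then have "v = q \<or> v = x" using imm_predsD(4)[OF q uv(2) \<open>le q v\<close>] by blast
    then show False using not_vq not_above co_tree_refl uv(2) by blast
  qed
next
  show "le v q \<Longrightarrow> le u q" using co_tree_trans imm_predsD(1)[OF q] uv by blast
qed

definition F3_collapse :: "'a \<Rightarrow> 'a \<Rightarrow> 'a \<Rightarrow> 'a \<Rightarrow> nat" where
  "F3_collapse x p1 p2 u = (if le x u then 0 else if le u p1 then 1 else if le u p2 then 2 else 3)"

lemma F3_collapse_mono:
  assumes x: "x \<in> X" and p: "p1 \<in> imm_preds X le x" "p2 \<in> imm_preds X le x"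
    and uv: "u \<in> X" "v \<in> X" "le u v"
  shows "F3_le (F3_collapse x p1 p2 u) (F3_collapse x p1 p2 v)"
proof (cases "le x v")
  case False
  then have "\<not> le x u" using co_tree_trans x uv by blast
  moreover have "le u p1 \<longleftrightarrow> le v p1" "le u p2 \<longleftrightarrow> le v p2"
    using below_imm_pred_iff[OF x _ uv False] p by blast+
  ultimately show ?thesis using False unfolding F3_collapse_def F3_le_def by simp
qed (simp add: F3_collapse_def F3_le_def)

lemma F3_collapse_values:
  assumes x: "x \<in> X"
    and p: "p1 \<in> imm_preds X le x" "p2 \<in> imm_preds X le x" "p3 \<in> imm_preds X le x"
    and distinct: "p1 \<noteq> p2" "p1 \<noteq> p3" "p2 \<noteq> p3"
  shows "F3_collapse x p1 p2 x = 0" "F3_collapse x p1 p2 p1 = 1"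
    and "F3_collapse x p1 p2 p2 = 2" "F3_collapse x p1 p2 p3 = 3"
proof -
  have "\<not> le p2 p1" "\<not> le p3 p1" "\<not> le p3 p2"
    using imm_preds_incomparable[OF p(2) p(1)] imm_preds_incomparable[OF p(3) p(1)]
      imm_preds_incomparable[OF p(3) p(2)] distinct by auto
  moreover have "\<not> le x p1" "\<not> le x p2" "\<not> le x p3"
    using not_above_imm_pred[OF x] p by auto
  moreover have "le x x" "le p1 p1" "le p2 p2"
    using co_tree_refl x imm_predsD(1)[OF p(1)] imm_predsD(1)[OF p(2)] by auto
  ultimately show "F3_collapse x p1 p2 x = 0" "F3_collapse x p1 p2 p1 = 1"
    and "F3_collapse x p1 p2 p2 = 2" "F3_collapse x p1 p2 p3 = 3"
    unfolding F3_collapse_def by simp_all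
qed

lemma F3_collapse_image:
  assumes "x \<in> X"
    and "p1 \<in> imm_preds X le x" "p2 \<in> imm_preds X le x" "p3 \<in> imm_preds X le x"
    and "p1 \<noteq> p2" "p1 \<noteq> p3" "p2 \<noteq> p3"
  shows "F3_collapse x p1 p2 ` {x, p1, p2, p3} = F3"
  using F3_collapse_values[OF assms] unfolding F3_def by simp

lemma F3_collapse_back:
  assumes x: "x \<in> X"
    and p: "p1 \<in> imm_preds X le x" "p2 \<in> imm_preds X le x" "p3 \<in> imm_preds X le x"
    and distinct: "p1 \<noteq> p2" "p1 \<noteq> p3" "p2 \<noteq> p3"
    and u: "u \<in> X" and y: "y \<in> F3" "F3_le y (F3_collapse x p1 p2 u)"
  shows "\<exists>z\<in>X. le z u \<and> F3_collapse x p1 p2 z = y"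
proof (cases "y = F3_collapse x p1 p2 u")
  case True
  then show ?thesis using u co_tree_refl by auto
next
  case False
  then have "le x u"
    using y(2) unfolding F3_le_def F3_collapse_def by (auto split: if_splits)
  obtain z where z: "z \<in> {x, p1, p2, p3}" "F3_collapse x p1 p2 z = y"
    using y(1) F3_collapse_image[OF x p distinct] by (metis imageE)
  have "z \<in> X" "le z x"
    using z(1) x co_tree_refl imm_predsD(1,2) p by auto
  then have "le z u" using co_tree_trans x u \<open>le x u\<close> by blast
  then show ?thesis using \<open>z \<in> X\<close> z(2) by blast
qed

lemma F3_collapse_forth:
  assumes x: "x \<in> X" and u: "u \<in> X" and y: "F3_le (F3_collapse x p1 p2 u) y"
  shows "\<exists>z\<in>X. le u z \<and> F3_collapse x p1 p2 z = y"
proof -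
  obtain t where t: "t \<in> X" "\<forall>v\<in>X. le v t" by (rule co_tree_obtain_top)
  have "F3_collapse x p1 p2 t = 0" using t x unfolding F3_collapse_def by simp
  moreover have "le u u" using co_tree_refl u .
  ultimately show ?thesis using y t u unfolding F3_le_def by auto
qed

lemma surj_bi_p_morphism_F3_collapse:
  assumes x: "x \<in> X"
    and p: "p1 \<in> imm_preds X le x" "p2 \<in> imm_preds X le x" "p3 \<in> imm_preds X le x"
    and distinct: "p1 \<noteq> p2" "p1 \<noteq> p3" "p2 \<noteq> p3"
  shows "surj_bi_p_morphism X le F3 F3_le (F3_collapse x p1 p2)"
proof -
  have into: "F3_collapse x p1 p2 u \<in> F3" for u
    unfolding F3_collapse_def F3_def by simp
  have "F3 = F3_collapse x p1 p2 ` {x, p1, p2, p3}"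
    using F3_collapse_image[OF x p distinct] by (rule sym)
  also have "\<dots> \<subseteq> F3_collapse x p1 p2 ` X"
    using x imm_predsD(1) p by (intro image_mono) auto
  finally have onto: "F3_collapse x p1 p2 ` X = F3" using into by blast
  show ?thesis
    unfolding surj_bi_p_morphism_def bi_p_morphism_def
    by (intro conjI ballI impI)
      (simp_all add: into onto F3_collapse_mono[OF x p(1,2)] F3_collapse_forth[OF x]
        F3_collapse_back[OF x p distinct])
qed

lemma surj_bi_p_morphism_F3_if_three_imm_preds:
  assumes x: "x \<in> X" and card: "2 < card (imm_preds X le x)"
  shows "\<exists>f. surj_bi_p_morphism X le F3 F3_le f"
proof -
  have "3 \<le> card (imm_preds X le x)" using card by simp
  then obtain P where P: "P \<subseteq> imm_preds X le x" "card P = 3" "finite P"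
    by (rule obtain_subset_with_card_n)
  obtain p1 p2 p3 where p: "P = {p1, p2, p3}" and distinct: "p1 \<noteq> p2" "p1 \<noteq> p3" "p2 \<noteq> p3"
    using card_3_iff[THEN iffD1, OF P(2)] by blast
  have "p1 \<in> imm_preds X le x" "p2 \<in> imm_preds X le x" "p3 \<in> imm_preds X le x"
    using P(1) p by auto
  then show ?thesis
    using surj_bi_p_morphism_F3_collapse[OF x _ _ _ distinct] by blast
qed

end

theorem lemma3p8:
  fixes X :: "'a set" and le :: "'a \<Rightarrow> 'a \<Rightarrow> bool" and J :: "'v biform"
  assumes "is_jankov_F3 TYPE('a) J"
    and "finite_co_tree X le"
    and "validates X le J"
  shows "\<forall>x\<in>X. card (imm_preds X le x) \<le> 2"
proof (rule ccontr)
  assume "\<not> (\<forall>x\<in>X. card (imm_preds X le x) \<le> 2)"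
  then obtain x where x: "x \<in> X" "2 < card (imm_preds X le x)" by (auto simp: not_le)
  have "co_tree X le" using assms(2) unfolding finite_co_tree_def by simp
  then have "\<exists>f. surj_bi_p_morphism X le F3 F3_le f"
    using x by (rule surj_bi_p_morphism_F3_if_three_imm_preds)
  moreover have "refutes X le J \<longleftrightarrow> (\<exists>f. surj_bi_p_morphism X le F3 F3_le f)"
    using assms(1,2) unfolding is_jankov_F3_def by simp
  ultimately show False using assms(3) unfolding refutes_def by simp
qed

end
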